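(* Let $k,t \geq 2$ be integers and $1 \leq r \leq t$. If $z = \eta + iy$ with $\eta > 0$ and $q=e^{-z}$, then \[ |L_k^\times(r,t;q)| \leq \frac{e^{\eta}}{\eta^2}. \]
   Context: $L_k^\times(r,t;q) \coloneqq \sum_{m\ge1,\ k\nmid m,\ m\equiv r \pmod t} \frac{q^m}{1-q^m}$. *)

theory Defs
  imports "HOL-Analysis.Analysis"
begin

definition L_cross :: "nat \<Rightarrow> nat \<Rightarrow> nat \<Rightarrow> complex \<Rightarrow> complex" where
  "L_cross k r t q =
     infsum (\<lambda>m::nat. q ^ m / (1 - q ^ m))
       {m. m \<ge> 1 \<and> \<not> k dvd m \<and> m mod t = r mod t}"

end

theory Submission
  imports Defs
begin

text \<open>Put \<open>a = |q| = exp (- \<eta>) < 1\<close>. Each term satisfies \<open>|q^m / (1 - q^m)| \<le> a^m / (1 - a)\<close>,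
  so the Lambert series over any set of positive indices is dominated by the geometric sum
  \<open>a / (1 - a)^2 = e^\<eta> / (e^\<eta> - 1)^2\<close>, and \<open>e^\<eta> - 1 \<ge> \<eta>\<close>.\<close>

lemma norm_lambert_term_le:
  fixes w :: "'a::real_normed_field"
  assumes "norm w < 1" and "m \<ge> 1"
  shows "norm (w ^ m / (1 - w ^ m)) \<le> norm w ^ m / (1 - norm w)"
proof -
  have "norm w ^ m \<le> norm w"
    using power_decreasing[of 1 m "norm w"] assms by simp
  then have "1 - norm w \<le> norm (1 - w ^ m)"
    using norm_triangle_ineq2[of 1 "w ^ m"] by (simp add: norm_power)
  then have "norm w ^ m / norm (1 - w ^ m) \<le> norm w ^ m / (1 - norm w)"
    using assms(1) by (intro divide_left_mono mult_pos_pos) auto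
  then show ?thesis
    by (simp add: norm_divide norm_power)
qed

lemma norm_lambert_infsum_le:
  fixes w :: "'a::{real_normed_field, banach}"
  assumes "norm w < 1" and "S \<subseteq> {1..}"
  shows "norm (\<Sum>\<^sub>\<infinity>m\<in>S. w ^ m / (1 - w ^ m)) \<le> norm w / (1 - norm w) ^ 2"
proof -
  define a where "a = norm w"
  define f where "f = (\<lambda>m. w ^ m / (1 - w ^ m))"
  define g where "g m = a ^ m / (1 - a)" for m
  have a: "0 \<le> a" "a < 1"
    using assms(1) by (auto simp: a_def)
  have g_nonneg: "g m \<ge> 0" for m
    using a by (simp add: g_def)
  have f_le_g: "norm (f m) \<le> g m" if "m \<in> S" for m
    using norm_lambert_term_le[OF assms(1)] that assms(2) by (auto simp: f_def g_def a_def)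
  have "(g has_sum (a / (1 - a) / (1 - a))) {1..}"
    unfolding g_def using has_sum_geometric_from_1[of a] a by (intro has_sum_divide_const) simp
  then have g_sum: "(g has_sum (a / (1 - a) ^ 2)) {1..}"
    by (simp add: power2_eq_square)
  have g_summable: "g summable_on S"
    using summable_on_subset_banach[OF has_sum_imp_summable[OF g_sum] assms(2)] .
  have f_summable: "f summable_on S"
    using Infinite_Sum.abs_summable_on_comparison_test'[OF g_summable f_le_g] by (rule abs_summable_summable)
  have "norm (infsum f S) \<le> infsum g S"
    using f_le_g by (intro norm_infsum_le[OF has_sum_infsum has_sum_infsum] f_summable g_summable)
  also have "\<dots> \<le> infsum g {1..}"
    using g_summable has_sum_imp_summable[OF g_sum] assms(2) g_nonneg
    by (intro infsum_mono_neutral) auto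
  also have "\<dots> = a / (1 - a) ^ 2"
    using g_sum by (rule infsumI)
  finally show ?thesis
    by (simp add: f_def a_def)
qed

lemma exp_minus_div_one_minus_exp_minus_sq_le:
  fixes \<eta> :: real
  assumes "\<eta> > 0"
  shows "exp (- \<eta>) / (1 - exp (- \<eta>)) ^ 2 \<le> exp \<eta> / \<eta> ^ 2"
proof -
  have "exp (- \<eta>) / (1 - exp (- \<eta>)) ^ 2 = exp \<eta> / (exp \<eta> - 1) ^ 2"
    by (simp add: exp_minus field_simps power2_eq_square)
  also have "\<dots> \<le> exp \<eta> / \<eta> ^ 2"
  proof -
    have "\<eta> \<le> exp \<eta> - 1"
      using exp_ge_add_one_self[of \<eta>] by linarith
    then show ?thesis
      using assms by (intro divide_left_mono power_mono) auto
  qed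
  finally show ?thesis .
qed

theorem lemma3p9:
  fixes k t r :: nat and \<eta> y :: real and z q :: complex
  assumes "k \<ge> 2" and "t \<ge> 2" and "1 \<le> r" and "r \<le> t"
    and "\<eta> > 0" and "z = Complex \<eta> y" and "q = exp (- z)"
  shows "norm (L_cross k r t q) \<le> exp \<eta> / \<eta> ^ 2"
proof -
  have norm_q: "norm q = exp (- \<eta>)"
    using assms(6,7) by simp
  have "norm (L_cross k r t q) \<le> norm q / (1 - norm q) ^ 2"
    unfolding L_cross_def using assms(5) norm_q by (intro norm_lambert_infsum_le) auto
  also have "\<dots> \<le> exp \<eta> / \<eta> ^ 2"
    using norm_q exp_minus_div_one_minus_exp_minus_sq_le[OF assms(5)] by simp
  finally show ?thesis .
qed

end
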